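(* Let $N=2$ with $r_{11}=1$ and let $g\in(-2,2)$, $h=\sqrt{1-g^2/4}$, $G=g/h$. For $\varepsilon\in\{1,-1\}$ and $f\in[0,\pi]$ put $$l_\varepsilon(f)=\Big(\varepsilon\,\tfrac1h\sin f\;e^{\frac G2(f-\frac\pi2)},\;\big(\cos f-\tfrac G2\sin f\big)e^{\frac G2(f-\frac\pi2)}\Big).$$ Then for every $f\in[0,\pi]$ the point $l_\varepsilon(f)$ lies on the Finsleroid Indicatrix, i.e. $K(g;l_\varepsilon(f))=1$, and, writing $l_\varepsilon=(l^1,l^2)$, $$\sqrt{\det\big(g_{pq}(g;l_\varepsilon(f))\big)}\;\Big|\,l^2\frac{dl^1}{df}-l^1\frac{dl^2}{df}\Big|=\frac1h .$$ In other words, along the indicatrix the Landsberg angle $\theta$, defined by $d\theta=\sqrt{\det(g_{pq})}\,|R^2dR^1-R^1dR^2|/K^2$, satisfies $d\theta=\frac1h\,df$, so that $f$ equals $h$ times the Landsberg angle.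
   Context: Here $V_2=\mathbb{R}^2$ with points $R=(R^1,R^2)$, $Z=R^2$, $q(R)=|R^1|$. Define $B(g;R)=Z^2+gqZ+q^2$, $A(g;R)=Z+\frac12 gq$, $\Phi(g;R)=\arctan\big(A/(hq)\big)$ if $q>0$, $\Phi=\pi/2$ if $q=0,Z>0$, $\Phi=-\pi/2$ if $q=0,Z<0$; $J(g;R)=e^{\frac12 G\Phi}$ and the Finsleroid metric function $K(g;R)=\sqrt{B(g;R)}\,J(g;R)$ ($K(g;0)=0$). The Finsler metric tensor is $g_{pq}(g;R)=\frac12\,\partial^2K^2(g;R)/\partial R^p\partial R^q$. The Finsleroid Indicatrix is $\{R:K(g;R)=1\}$. *)

theory Defs
  imports "HOL-Analysis.Analysis"
begin

text \<open>Finsleroid in dimension N = 2: points R = (R1, R2), Z = R2, q = abs R1.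
  All quantities depend on the parameter g (with h = sqrt(1 - g^2/4), G = g/h).\<close>

definition fh :: "real \<Rightarrow> real" where
  "fh g = sqrt (1 - g\<^sup>2 / 4)"

definition fG :: "real \<Rightarrow> real" where
  "fG g = g / fh g"

definition fq :: "real \<Rightarrow> real \<Rightarrow> real" where
  "fq R1 R2 = \<bar>R1\<bar>"

definition fB :: "real \<Rightarrow> real \<Rightarrow> real \<Rightarrow> real" where
  "fB g R1 R2 = R2\<^sup>2 + g * fq R1 R2 * R2 + (fq R1 R2)\<^sup>2"

definition fA :: "real \<Rightarrow> real \<Rightarrow> real \<Rightarrow> real" where
  "fA g R1 R2 = R2 + g * fq R1 R2 / 2"

definition fPhi :: "real \<Rightarrow> real \<Rightarrow> real \<Rightarrow> real" where
  "fPhi g R1 R2 =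
     (if fq R1 R2 > 0 then arctan (fA g R1 R2 / (fh g * fq R1 R2))
      else if R2 > 0 then pi / 2
      else if R2 < 0 then - pi / 2
      else 0)"

definition fJ :: "real \<Rightarrow> real \<Rightarrow> real \<Rightarrow> real" where
  "fJ g R1 R2 = exp (fG g * fPhi g R1 R2 / 2)"

definition finsleroid_K :: "real \<Rightarrow> real \<Rightarrow> real \<Rightarrow> real" where
  "finsleroid_K g R1 R2 =
     (if R1 = 0 \<and> R2 = 0 then 0 else sqrt (fB g R1 R2) * fJ g R1 R2)"

definition Ksq :: "real \<Rightarrow> real \<Rightarrow> real \<Rightarrow> real" where
  "Ksq g R1 R2 = (finsleroid_K g R1 R2)\<^sup>2"

definition partial1 :: "(real \<Rightarrow> real \<Rightarrow> real) \<Rightarrow> real \<Rightarrow> real \<Rightarrow> real" where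
  "partial1 F x y = deriv (\<lambda>t. F t y) x"

definition partial2 :: "(real \<Rightarrow> real \<Rightarrow> real) \<Rightarrow> real \<Rightarrow> real \<Rightarrow> real" where
  "partial2 F x y = deriv (\<lambda>t. F x t) y"

definition finsler_g :: "real \<Rightarrow> nat \<Rightarrow> nat \<Rightarrow> real \<Rightarrow> real \<Rightarrow> real" where
  "finsler_g g p q R1 R2 =
     (let D = (\<lambda>i F. if i = 1 then partial1 F else partial2 F)
      in (1/2) * D p (D q (Ksq g)) R1 R2)"

definition finsler_det :: "real \<Rightarrow> real \<Rightarrow> real \<Rightarrow> real" where
  "finsler_det g R1 R2 =
     finsler_g g 1 1 R1 R2 * finsler_g g 2 2 R1 R2 - finsler_g g 1 2 R1 R2 * finsler_g g 2 1 R1 R2"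

definition l1 :: "real \<Rightarrow> real \<Rightarrow> real \<Rightarrow> real" where
  "l1 g \<epsilon> f = \<epsilon> * (1 / fh g) * sin f * exp (fG g / 2 * (f - pi / 2))"

definition l2 :: "real \<Rightarrow> real \<Rightarrow> real \<Rightarrow> real" where
  "l2 g \<epsilon> f = (cos f - fG g / 2 * sin f) * exp (fG g / 2 * (f - pi / 2))"

end

theory Submission
  imports Defs
begin

(* In the coordinates (h q, A), with A = Z + g q / 2, the Finsleroid function is polar:
   B = (h q)^2 + A^2, and Phi = arctan (A / (h q)) is the polar angle of (h q, A).  The curve l_eps
   is the logarithmic spiral h q = e sin f, A = e cos f with e = exp (G (f - pi/2) / 2), so B = e^2,
   Phi = pi/2 - f and K = e exp (G Phi / 2) = 1.
   Differentiating Phi gives d(K^2) = 2 J^2 (R^1 dR^1 + (Z + g q) dZ), and differentiating once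
   more, det g_pq = J^4 off the origin; on the axis R^1 = 0 one writes Phi as a smooth function of
   q instead.  On the curve sqrt (det g_pq) = J^2 = e^-2, which cancels the Wronskian
   l^2 dl^1/df - l^1 dl^2/df = eps e^2 / h. *)

lemma has_real_derivative_abs:
  fixes u :: real
  assumes "u \<noteq> 0"
  shows "((\<lambda>t. \<bar>t\<bar>) has_real_derivative sgn u) (at u)"
  using has_derivative_norm[OF assms]
  by (simp add: has_field_derivative_def inner_real_def real_norm_def[abs_def]
      mult.commute[of _ "sgn u"])

lemma has_real_derivative_comp_abs_zero:
  fixes F :: "real \<Rightarrow> real"
  assumes "(F has_real_derivative 0) (at 0)"
  shows "((\<lambda>s. F \<bar>s\<bar>) has_real_derivative 0) (at 0)"
proof -
  obtain Q where Q: "\<And>z. F z - F 0 = Q z * (z - 0)" "isCont Q 0" "Q 0 = 0"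
    using assms unfolding CARAT_DERIV by blast
  have "isCont (\<lambda>z. Q \<bar>z\<bar>) 0"
    using Q(2) by (intro continuous_at_compose[unfolded o_def, of _ abs Q]) (auto intro: continuous_intros)
  then have "((\<lambda>z. \<bar>Q \<bar>z\<bar>\<bar>) \<longlongrightarrow> 0) (at 0)"
    using Q(3) unfolding isCont_def by (metis abs_zero tendsto_rabs)
  then have "((\<lambda>z. sgn z * Q \<bar>z\<bar>) \<longlongrightarrow> 0) (at 0)"
    by (rule Lim_null_comparison[rotated]) (auto simp: sgn_if abs_mult)
  moreover have "F \<bar>z\<bar> - F \<bar>0\<bar> = (sgn z * Q \<bar>z\<bar>) * (z - 0)" for z
    using Q(1) by (simp add: sgn_if)
  ultimately show ?thesis
    unfolding CARAT_DERIV isCont_def by (intro exI[of _ "\<lambda>z. sgn z * Q \<bar>z\<bar>"]) simp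
qed

lemma has_real_derivative_mult_ident_zero:
  fixes f :: "real \<Rightarrow> real"
  assumes "isCont f 0"
  shows "((\<lambda>t. t * f t) has_real_derivative f 0) (at 0)"
  unfolding CARAT_DERIV using assms by (intro exI[of _ f]) simp

lemma arctan_cot: "0 < f \<Longrightarrow> f < pi \<Longrightarrow> arctan (cos f / sin f) = pi / 2 - f"
  by (rule arctan_unique) (auto simp: tan_def sin_diff cos_diff)

lemma fJ_squared: "(fJ g u y)\<^sup>2 = exp (fG g * fPhi g u y)"
  by (simp add: fJ_def power2_eq_square flip: exp_add)

lemma fB_origin: "fB g 0 0 = 0"
  by (simp add: fB_def fq_def)

(* For Z = y \<noteq> 0 and small q, arctan (A / (h q)) = sgn y pi/2 - arctan (h q / A): this
   expresses Phi (R^1, y) as a function of q = |R^1| that is smooth across the axis q = 0. *)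
definition fPhi_axis :: "real \<Rightarrow> real \<Rightarrow> real \<Rightarrow> real" where
  "fPhi_axis g y r = sgn y * pi / 2 - arctan (fh g * r / (y + g * r / 2))"

context
  fixes g :: real
  assumes g_gt: "-2 < g" and g_lt: "g < 2"
begin

lemma g_squared_lt: "g\<^sup>2 < 4"
proof -
  have "\<bar>g\<bar>\<^sup>2 < 2\<^sup>2"
    using g_gt g_lt by (intro power_strict_mono) auto
  then show ?thesis by simp
qed

lemma fh_squared: "(fh g)\<^sup>2 = 1 - g\<^sup>2 / 4"
  using g_squared_lt by (simp add: fh_def)

lemma fh_pos: "fh g > 0"
  using g_squared_lt by (simp add: fh_def)

lemma fB_eq_sum_squares: "fB g u y = (fA g u y)\<^sup>2 + (fh g * fq u y)\<^sup>2"
  unfolding fB_def fA_def power_mult_distrib fh_squared by (simp add: power2_eq_square algebra_simps)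

lemma fB_pos: "u \<noteq> 0 \<Longrightarrow> fB g u y > 0"
  using fh_pos by (simp add: fB_eq_sum_squares fq_def add_nonneg_pos)

lemma Ksq_eq: "Ksq g u y = fB g u y * (fJ g u y)\<^sup>2"
  using fB_eq_sum_squares[of u y]
  by (auto simp: Ksq_def finsleroid_K_def power_mult_distrib fB_origin)

lemma fPhi_off_axis: "u \<noteq> 0 \<Longrightarrow> fPhi g u y = arctan ((y + g * \<bar>u\<bar> / 2) / (fh g * \<bar>u\<bar>))"
  by (simp add: fPhi_def fq_def fA_def)

lemma fPhi_has_derivative_1:
  assumes u: "u \<noteq> 0"
  shows "((\<lambda>t. fPhi g t y) has_real_derivative - fh g * y * sgn u / fB g u y) (at u)"
proof -
  define h r where "h = fh g" and "r = \<bar>u\<bar>"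
  have h: "h > 0" and r: "r > 0" and B: "fB g u y = (y + g * r / 2)\<^sup>2 + (h * r)\<^sup>2"
    using fh_pos u by (simp_all add: h_def r_def fB_eq_sum_squares fA_def fq_def)
  have "((\<lambda>r. arctan ((y + g * r / 2) / (h * r))) has_real_derivative - h * y / fB g u y) (at r)"
    using r h fB_pos[OF u] unfolding B
    by (auto intro!: derivative_eq_intros simp: field_simps power2_eq_square)
  from DERIV_chain2[OF this[unfolded r_def] has_real_derivative_abs[OF u]]
  have "((\<lambda>t. arctan ((y + g * \<bar>t\<bar> / 2) / (h * \<bar>t\<bar>))) has_real_derivative - h * y * sgn u / fB g u y) (at u)"
    by simp
  then show ?thesis unfolding h_def
    by (rule has_field_derivative_transform_within_open[of _ _ _ "- {0}"])
      (use u in \<open>auto simp: fPhi_off_axis\<close>)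
qed

lemma fPhi_has_derivative_2:
  assumes u: "u \<noteq> 0"
  shows "((\<lambda>t. fPhi g u t) has_real_derivative fh g * \<bar>u\<bar> / fB g u y) (at y)"
proof -
  have B: "fB g u y = (y + g * \<bar>u\<bar> / 2)\<^sup>2 + (fh g * \<bar>u\<bar>)\<^sup>2"
    by (simp add: fB_eq_sum_squares fA_def fq_def)
  show ?thesis
    unfolding fPhi_off_axis[OF u] using u fh_pos fB_pos[OF u] unfolding B
    by (auto intro!: derivative_eq_intros simp: field_simps power2_eq_square)
qed

lemma fJ_squared_has_derivative_1:
  assumes "u \<noteq> 0"
  shows "((\<lambda>t. (fJ g t y)\<^sup>2) has_real_derivative - g * y * sgn u * (fJ g u y)\<^sup>2 / fB g u y) (at u)"
proof -
  have "((\<lambda>t. exp (fG g * fPhi g t y)) has_real_derivative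
      exp (fG g * fPhi g u y) * (fG g * (- fh g * y * sgn u / fB g u y))) (at u)"
    by (intro DERIV_chain2[OF DERIV_exp] DERIV_cmult fPhi_has_derivative_1 assms)
  then show ?thesis
    unfolding fJ_squared using fh_pos by (simp add: fG_def mult_ac)
qed

lemma fJ_squared_has_derivative_2:
  assumes "u \<noteq> 0"
  shows "((\<lambda>t. (fJ g u t)\<^sup>2) has_real_derivative g * \<bar>u\<bar> * (fJ g u y)\<^sup>2 / fB g u y) (at y)"
proof -
  have "((\<lambda>t. exp (fG g * fPhi g u t)) has_real_derivative
      exp (fG g * fPhi g u y) * (fG g * (fh g * \<bar>u\<bar> / fB g u y))) (at y)"
    by (intro DERIV_chain2[OF DERIV_exp] DERIV_cmult fPhi_has_derivative_2 assms)
  then show ?thesis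
    unfolding fJ_squared using fh_pos by (simp add: fG_def mult_ac)
qed

lemma Ksq_has_derivative_1_off_axis:
  assumes u: "u \<noteq> 0"
  shows "((\<lambda>t. Ksq g t y) has_real_derivative 2 * u * (fJ g u y)\<^sup>2) (at u)"
proof -
  have "((\<lambda>t. fB g t y) has_real_derivative g * sgn u * y + 2 * u) (at u)"
    unfolding fB_def fq_def using u by (auto intro!: derivative_eq_intros has_real_derivative_abs)
  from DERIV_mult[OF this fJ_squared_has_derivative_1[of u y, OF u]]
  show ?thesis
    unfolding Ksq_eq using fB_pos[OF u, of y] by (simp add: algebra_simps less_imp_neq)
qed

lemma Ksq_has_derivative_2_off_axis:
  assumes u: "u \<noteq> 0"
  shows "((\<lambda>t. Ksq g u t) has_real_derivative 2 * (y + g * \<bar>u\<bar>) * (fJ g u y)\<^sup>2) (at y)"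
proof -
  have "((\<lambda>t. fB g u t) has_real_derivative 2 * y + g * \<bar>u\<bar>) (at y)"
    unfolding fB_def fq_def by (auto intro!: derivative_eq_intros)
  from DERIV_mult[OF this fJ_squared_has_derivative_2[of u y, OF u]]
  show ?thesis
    unfolding Ksq_eq using fB_pos[OF u, of y] by (simp add: algebra_simps less_imp_neq)
qed

lemma fPhi_eq_fPhi_axis_near_axis:
  assumes y: "y \<noteq> 0"
  shows "\<forall>\<^sub>F s in nhds 0. fPhi g s y = fPhi_axis g y \<bar>s\<bar>"
proof -
  have "\<forall>\<^sub>F s in nhds 0. s \<in> {-\<bar>y\<bar><..<\<bar>y\<bar>}"
    using y by (intro eventually_nhds_in_open) auto
  then show ?thesis
  proof eventually_elim
    case (elim s)
    show ?case
    proof (cases "s = 0")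
      case True
      then show ?thesis by (simp add: fPhi_def fPhi_axis_def fq_def sgn_if)
    next
      case False
      define A where "A = y + g * \<bar>s\<bar> / 2"
      have "\<bar>g * \<bar>s\<bar> / 2\<bar> = \<bar>g\<bar> / 2 * \<bar>s\<bar>"
        by (simp add: abs_mult)
      also have "\<dots> \<le> \<bar>s\<bar>"
        using g_gt g_lt by (intro mult_left_le_one_le) auto
      also have "\<dots> < \<bar>y\<bar>"
        using elim by auto
      finally have "\<bar>g * \<bar>s\<bar> / 2\<bar> < \<bar>y\<bar>" .
      then have sgn_A: "sgn A = sgn y"
        unfolding A_def by (auto simp: sgn_if)
      then have "A \<noteq> 0" and "fh g * \<bar>s\<bar> / A \<noteq> 0"
        using y fh_pos False by (auto simp: sgn_0_0)
      have "fPhi g s y = arctan (1 / (fh g * \<bar>s\<bar> / A))"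
        using False by (simp add: fPhi_def fq_def fA_def A_def)
      also have "\<dots> = sgn (fh g * \<bar>s\<bar> / A) * pi / 2 - arctan (fh g * \<bar>s\<bar> / A)"
        by (rule Transcendental.arctan_inverse) fact
      finally show ?thesis
        using fh_pos False sgn_A by (simp add: fPhi_axis_def A_def sgn_mult sgn_divide)
    qed
  qed
qed

lemma fPhi_axis_has_derivative:
  assumes "y \<noteq> 0"
  shows "(fPhi_axis g y has_real_derivative - fh g / y) (at 0)"
  unfolding fPhi_axis_def[abs_def] using assms
  by (auto intro!: derivative_eq_intros)

lemma isCont_fJ_squared_on_axis:
  assumes y: "y \<noteq> 0"
  shows "isCont (\<lambda>s. (fJ g s y)\<^sup>2) 0"
proof -
  have "isCont (fPhi_axis g y) \<bar>0\<bar>"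
    using DERIV_isCont[OF fPhi_axis_has_derivative[OF y]] by simp
  then have "isCont (\<lambda>s. exp (fG g * fPhi_axis g y \<bar>s\<bar>)) 0"
    by (intro continuous_intros continuous_at_compose[unfolded o_def, of _ abs]) auto
  moreover have ev: "\<forall>\<^sub>F s in nhds 0. (fJ g s y)\<^sup>2 = exp (fG g * fPhi_axis g y \<bar>s\<bar>)"
    using fPhi_eq_fPhi_axis_near_axis[OF y] by eventually_elim (simp add: fJ_squared)
  ultimately show ?thesis
    using isCont_cong[OF ev] by blast
qed

lemma Ksq_has_derivative_1_on_axis:
  assumes y: "y \<noteq> 0"
  shows "((\<lambda>s. Ksq g s y) has_real_derivative 0) (at 0)"
proof -
  define F where "F r = (y\<^sup>2 + g * r * y + r\<^sup>2) * exp (fG g * fPhi_axis g y r)" for r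
  have "(F has_real_derivative
      (g * y + 2 * 0) * exp (fG g * fPhi_axis g y 0)
      + exp (fG g * fPhi_axis g y 0) * (fG g * (- fh g / y)) * (y\<^sup>2 + g * 0 * y + 0\<^sup>2)) (at 0)"
    unfolding F_def
    by (intro DERIV_mult DERIV_chain2[OF DERIV_exp] DERIV_cmult fPhi_axis_has_derivative y)
      (auto intro!: derivative_eq_intros)
  then have "(F has_real_derivative 0) (at 0)"
    using y fh_pos by (simp add: fG_def power2_eq_square)
  then have "((\<lambda>s. F \<bar>s\<bar>) has_real_derivative 0) (at 0)"
    by (rule has_real_derivative_comp_abs_zero)
  moreover have ev: "\<forall>\<^sub>F s in nhds 0. F \<bar>s\<bar> = Ksq g s y"
    using fPhi_eq_fPhi_axis_near_axis[OF y]
    by eventually_elim (simp add: F_def Ksq_eq fJ_squared fB_def fq_def)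
  ultimately show ?thesis
    using DERIV_cong_ev[OF refl ev refl] by blast
qed

lemma fJ_squared_locally_constant_on_axis:
  assumes y: "y \<noteq> 0"
  shows "\<forall>\<^sub>F t in nhds y. (fJ g 0 t)\<^sup>2 = (fJ g 0 y)\<^sup>2"
proof -
  have "\<forall>\<^sub>F t in nhds y. sgn t = sgn y"
  proof (cases "y > 0")
    case True
    then show ?thesis using eventually_nhds_in_open[of "{0<..}" y] by (auto elim: eventually_mono)
  next
    case False
    then show ?thesis using eventually_nhds_in_open[of "{..<0}" y] y by (auto elim: eventually_mono)
  qed
  then show ?thesis
    by eventually_elim (auto simp: fJ_squared fPhi_def fq_def sgn_if split: if_splits)
qed

lemma Ksq_has_derivative_2_on_axis:
  assumes y: "y \<noteq> 0"
  shows "((\<lambda>t. Ksq g 0 t) has_real_derivative 2 * y * (fJ g 0 y)\<^sup>2) (at y)"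
proof -
  have "((\<lambda>t. t\<^sup>2 * (fJ g 0 y)\<^sup>2) has_real_derivative 2 * y * (fJ g 0 y)\<^sup>2) (at y)"
    by (auto intro!: derivative_eq_intros)
  moreover have ev: "\<forall>\<^sub>F t in nhds y. t\<^sup>2 * (fJ g 0 y)\<^sup>2 = Ksq g 0 t"
    using fJ_squared_locally_constant_on_axis[OF y]
    by eventually_elim (simp add: Ksq_eq fB_def fq_def)
  ultimately show ?thesis
    using DERIV_cong_ev[OF refl ev refl] by blast
qed

lemma Ksq_has_derivative_1_origin: "((\<lambda>s. Ksq g s 0) has_real_derivative 0) (at 0)"
proof -
  define c where "c = exp (fG g * arctan (g / (2 * fh g)))"
  have "Ksq g s 0 = c * s\<^sup>2" for s
  proof (cases "s = 0")
    case False
    then have "g * \<bar>s\<bar> / 2 / (fh g * \<bar>s\<bar>) = g / (2 * fh g)"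
      by simp
    with False show ?thesis
      by (simp add: Ksq_eq fJ_squared fPhi_def fq_def fA_def fB_def c_def)
  qed (simp add: Ksq_def finsleroid_K_def)
  moreover have "((\<lambda>s. c * s\<^sup>2) has_real_derivative 0) (at 0)"
    by (auto intro!: derivative_eq_intros)
  ultimately show ?thesis
    by simp
qed

(* On the axis J^2 jumps at the origin, but it is bounded, which suffices for t^2 J^2. *)
lemma Ksq_has_derivative_2_origin: "((\<lambda>t. Ksq g 0 t) has_real_derivative 0) (at 0)"
proof -
  define M where "M = exp (\<bar>fG g\<bar> * pi / 2)"
  have J_bound: "(fJ g 0 t)\<^sup>2 \<le> M" for t
  proof -
    have Phi_bound: "\<bar>fPhi g 0 t\<bar> \<le> pi / 2"
      by (simp add: fPhi_def fq_def)
    have "fG g * fPhi g 0 t \<le> \<bar>fG g\<bar> * \<bar>fPhi g 0 t\<bar>"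
      by (metis abs_ge_self abs_mult)
    also have "\<dots> \<le> \<bar>fG g\<bar> * (pi / 2)"
      using Phi_bound by (intro mult_left_mono) auto
    finally show ?thesis
      by (simp add: fJ_squared M_def)
  qed
  have "((\<lambda>t. t * (fJ g 0 t)\<^sup>2) \<longlongrightarrow> 0) (at 0)"
  proof (rule Lim_null_comparison)
    show "\<forall>\<^sub>F t in at 0. norm (t * (fJ g 0 t)\<^sup>2) \<le> \<bar>t\<bar> * M"
      using J_bound by (intro always_eventually allI) (simp add: abs_mult mult_left_mono)
    show "((\<lambda>t. \<bar>t\<bar> * M) \<longlongrightarrow> 0) (at 0)"
      by (auto intro!: tendsto_eq_intros)
  qed
  then have "((\<lambda>t. t * (t * (fJ g 0 t)\<^sup>2)) has_real_derivative 0 * (fJ g 0 0)\<^sup>2) (at 0)"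
    by (intro has_real_derivative_mult_ident_zero) (simp add: isCont_def)
  moreover have "Ksq g 0 t = t * (t * (fJ g 0 t)\<^sup>2)" for t
    by (simp add: Ksq_eq fB_def fq_def power2_eq_square)
  ultimately show ?thesis
    by simp
qed

lemma Ksq_has_derivative_1: "((\<lambda>s. Ksq g s y) has_real_derivative 2 * u * (fJ g u y)\<^sup>2) (at u)"
proof (cases "u = 0")
  case False
  then show ?thesis by (rule Ksq_has_derivative_1_off_axis)
next
  case True
  then show ?thesis
    using Ksq_has_derivative_1_on_axis Ksq_has_derivative_1_origin by (cases "y = 0") auto
qed

lemma Ksq_has_derivative_2:
  "((\<lambda>t. Ksq g u t) has_real_derivative 2 * (y + g * \<bar>u\<bar>) * (fJ g u y)\<^sup>2) (at y)"
proof (cases "u = 0")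
  case False
  then show ?thesis by (rule Ksq_has_derivative_2_off_axis)
next
  case True
  then show ?thesis
    using Ksq_has_derivative_2_on_axis Ksq_has_derivative_2_origin by (cases "y = 0") auto
qed

lemma partial1_Ksq: "partial1 (Ksq g) = (\<lambda>u y. 2 * u * (fJ g u y)\<^sup>2)"
  by (intro ext) (simp add: partial1_def DERIV_imp_deriv[OF Ksq_has_derivative_1])

lemma partial2_Ksq: "partial2 (Ksq g) = (\<lambda>u y. 2 * (y + g * \<bar>u\<bar>) * (fJ g u y)\<^sup>2)"
  by (intro ext) (simp add: partial2_def DERIV_imp_deriv[OF Ksq_has_derivative_2])

lemma finsler_g_off_axis:
  assumes u: "u \<noteq> 0"
  shows "finsler_g g 1 1 u y = (fJ g u y)\<^sup>2 * (1 - g * y * \<bar>u\<bar> / fB g u y)"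
    and "finsler_g g 1 2 u y = (fJ g u y)\<^sup>2 * g * u * \<bar>u\<bar> / fB g u y"
    and "finsler_g g 2 1 u y = (fJ g u y)\<^sup>2 * g * u * \<bar>u\<bar> / fB g u y"
    and "finsler_g g 2 2 u y = (fJ g u y)\<^sup>2 * (1 + g * \<bar>u\<bar> * (y + g * \<bar>u\<bar>) / fB g u y)"
proof -
  define E B where "E = (fJ g u y)\<^sup>2" and "B = fB g u y"
  have "B \<noteq> 0"
    using fB_pos[OF u, of y] by (simp add: B_def)
  have sgn: "sgn u * u = \<bar>u\<bar>" "sgn u * \<bar>u\<bar> = u"
    by (simp_all add: sgn_if)
  have "((\<lambda>t. 2 * t * (fJ g t y)\<^sup>2) has_real_derivative
      2 * E + (- g * y * sgn u * E / B) * (2 * u)) (at u)"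
    unfolding E_def B_def
    by (rule DERIV_mult[OF _ fJ_squared_has_derivative_1[OF u]]) (auto intro!: derivative_eq_intros)
  then show "finsler_g g 1 1 u y = (fJ g u y)\<^sup>2 * (1 - g * y * \<bar>u\<bar> / fB g u y)"
    using \<open>B \<noteq> 0\<close> sgn
    by (simp add: finsler_g_def partial1_Ksq partial1_def DERIV_imp_deriv E_def B_def field_simps)
  have "((\<lambda>t. 2 * (y + g * \<bar>t\<bar>) * (fJ g t y)\<^sup>2) has_real_derivative
      2 * (g * sgn u) * E + (- g * y * sgn u * E / B) * (2 * (y + g * \<bar>u\<bar>))) (at u)"
    unfolding E_def B_def
    by (rule DERIV_mult[OF _ fJ_squared_has_derivative_1[OF u]])
      (auto intro!: derivative_eq_intros has_real_derivative_abs u)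
  then show "finsler_g g 1 2 u y = (fJ g u y)\<^sup>2 * g * u * \<bar>u\<bar> / fB g u y"
    using \<open>B \<noteq> 0\<close> sgn
    by (simp add: finsler_g_def partial2_Ksq partial1_def DERIV_imp_deriv E_def B_def field_simps)
      (use u in \<open>cases "u > 0"; simp add: fB_def fq_def power2_eq_square algebra_simps\<close>)
  have "((\<lambda>t. 2 * u * (fJ g u t)\<^sup>2) has_real_derivative 2 * u * (g * \<bar>u\<bar> * E / B)) (at y)"
    unfolding E_def B_def by (rule DERIV_cmult[OF fJ_squared_has_derivative_2[OF u]])
  then show "finsler_g g 2 1 u y = (fJ g u y)\<^sup>2 * g * u * \<bar>u\<bar> / fB g u y"
    by (simp add: finsler_g_def partial1_Ksq partial2_def DERIV_imp_deriv E_def B_def)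
  have "((\<lambda>t. 2 * (t + g * \<bar>u\<bar>) * (fJ g u t)\<^sup>2) has_real_derivative
      2 * E + (g * \<bar>u\<bar> * E / B) * (2 * (y + g * \<bar>u\<bar>))) (at y)"
    unfolding E_def B_def
    by (rule DERIV_mult[OF _ fJ_squared_has_derivative_2[OF u]]) (auto intro!: derivative_eq_intros)
  then show "finsler_g g 2 2 u y = (fJ g u y)\<^sup>2 * (1 + g * \<bar>u\<bar> * (y + g * \<bar>u\<bar>) / fB g u y)"
    using \<open>B \<noteq> 0\<close>
    by (simp add: finsler_g_def partial2_Ksq partial2_def DERIV_imp_deriv E_def B_def field_simps)
qed

lemma finsler_g_on_axis:
  assumes y: "y \<noteq> 0"
  shows "finsler_g g 1 1 0 y = (fJ g 0 y)\<^sup>2"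
    and "finsler_g g 2 1 0 y = 0"
    and "finsler_g g 2 2 0 y = (fJ g 0 y)\<^sup>2"
proof -
  have "isCont (\<lambda>t. 2 * (fJ g t y)\<^sup>2) 0"
    by (intro continuous_intros isCont_fJ_squared_on_axis y)
  from has_real_derivative_mult_ident_zero[OF this]
  show "finsler_g g 1 1 0 y = (fJ g 0 y)\<^sup>2"
    by (simp add: finsler_g_def partial1_Ksq partial1_def DERIV_imp_deriv ac_simps)
  show "finsler_g g 2 1 0 y = 0"
    by (simp add: finsler_g_def partial1_Ksq partial2_def)
  have "((\<lambda>t. 2 * t * (fJ g 0 y)\<^sup>2) has_real_derivative 2 * (fJ g 0 y)\<^sup>2) (at y)"
    by (auto intro!: derivative_eq_intros)
  moreover have ev: "\<forall>\<^sub>F t in nhds y. 2 * t * (fJ g 0 y)\<^sup>2 = 2 * (t + g * \<bar>0\<bar>) * (fJ g 0 t)\<^sup>2"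
    using fJ_squared_locally_constant_on_axis[OF y] by eventually_elim simp
  ultimately show "finsler_g g 2 2 0 y = (fJ g 0 y)\<^sup>2"
    using DERIV_cong_ev[OF refl ev refl]
    by (simp add: finsler_g_def partial2_Ksq partial2_def DERIV_imp_deriv)
qed

lemma finsler_det_eq:
  assumes "\<not> (u = 0 \<and> y = 0)"
  shows "finsler_det g u y = (fJ g u y) ^ 4"
proof (cases "u = 0")
  case True
  with assms have "y \<noteq> 0"
    by simp
  then show ?thesis
    unfolding True finsler_det_def finsler_g_on_axis[OF \<open>y \<noteq> 0\<close>]
    by (simp add: power4_eq_xxxx power2_eq_square)
next
  case False
  define E B q where "E = (fJ g u y)\<^sup>2" and "B = fB g u y" and "q = \<bar>u\<bar>"
  have "B \<noteq> 0" and B: "B = y\<^sup>2 + g * q * y + q\<^sup>2" and u_sq: "u\<^sup>2 = q\<^sup>2"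
    using fB_pos[OF False, of y] by (auto simp: B_def fB_def fq_def q_def)
  have "finsler_det g u y = E * (1 - g * y * q / B) * (E * (1 + g * q * (y + g * q) / B))
      - E\<^sup>2 * g\<^sup>2 * u\<^sup>2 * q\<^sup>2 / B\<^sup>2"
    unfolding finsler_det_def finsler_g_off_axis[OF False]
    by (simp add: E_def B_def q_def power2_eq_square)
  also have "\<dots> = E\<^sup>2"
    using \<open>B \<noteq> 0\<close> unfolding u_sq
    by (simp add: field_simps) (simp add: B power2_eq_square power4_eq_xxxx algebra_simps)
  finally show ?thesis
    by (simp add: E_def)
qed

lemma curve_polar_coordinates:
  assumes "\<epsilon> \<in> {1, -1}" and "0 \<le> f" and "f \<le> pi"
  shows "fA g (l1 g \<epsilon> f) (l2 g \<epsilon> f) = cos f * exp (fG g / 2 * (f - pi / 2))"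
    and "fh g * fq (l1 g \<epsilon> f) (l2 g \<epsilon> f) = sin f * exp (fG g / 2 * (f - pi / 2))"
proof -
  have "sin f \<ge> 0"
    using assms(2,3) by (rule sin_ge_zero)
  then have q: "fq (l1 g \<epsilon> f) (l2 g \<epsilon> f) = sin f * exp (fG g / 2 * (f - pi / 2)) / fh g"
    using assms(1) fh_pos by (auto simp: fq_def l1_def abs_mult)
  then show "fh g * fq (l1 g \<epsilon> f) (l2 g \<epsilon> f) = sin f * exp (fG g / 2 * (f - pi / 2))"
    using fh_pos by simp
  show "fA g (l1 g \<epsilon> f) (l2 g \<epsilon> f) = cos f * exp (fG g / 2 * (f - pi / 2))"
    unfolding fA_def q using fh_pos by (simp add: l2_def fG_def field_simps)
qed

lemma fB_curve:
  assumes "\<epsilon> \<in> {1, -1}" and "0 \<le> f" and "f \<le> pi"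
  shows "fB g (l1 g \<epsilon> f) (l2 g \<epsilon> f) = (exp (fG g / 2 * (f - pi / 2)))\<^sup>2"
proof -
  have "fB g (l1 g \<epsilon> f) (l2 g \<epsilon> f)
      = (cos f * exp (fG g / 2 * (f - pi / 2)))\<^sup>2 + (sin f * exp (fG g / 2 * (f - pi / 2)))\<^sup>2"
    unfolding fB_eq_sum_squares curve_polar_coordinates[OF assms] ..
  also have "\<dots> = ((cos f)\<^sup>2 + (sin f)\<^sup>2) * (exp (fG g / 2 * (f - pi / 2)))\<^sup>2"
    by (simp only: power_mult_distrib distrib_right)
  finally show ?thesis
    by simp
qed

lemma curve_ne_origin:
  assumes "\<epsilon> \<in> {1, -1}" and "0 \<le> f" and "f \<le> pi"
  shows "\<not> (l1 g \<epsilon> f = 0 \<and> l2 g \<epsilon> f = 0)"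
  using fB_curve[OF assms] fB_origin by auto

lemma fPhi_curve:
  assumes "\<epsilon> \<in> {1, -1}" and "0 \<le> f" and "f \<le> pi"
  shows "fPhi g (l1 g \<epsilon> f) (l2 g \<epsilon> f) = pi / 2 - f"
proof -
  consider "f = 0" | "f = pi" | "0 < f" "f < pi"
    using assms(2,3) by linarith
  then show ?thesis
  proof cases
    case 3
    then have "fq (l1 g \<epsilon> f) (l2 g \<epsilon> f) > 0"
      using curve_polar_coordinates(2)[OF assms] fh_pos sin_gt_zero
      by (metis exp_gt_zero mult_pos_pos zero_less_mult_pos)
    then have "fPhi g (l1 g \<epsilon> f) (l2 g \<epsilon> f) = arctan (cos f / sin f)"
      by (simp add: fPhi_def curve_polar_coordinates[OF assms])
    with 3 show ?thesis
      by (simp add: arctan_cot)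
  qed (simp_all add: fPhi_def fq_def l1_def l2_def)
qed

lemma finsleroid_K_curve:
  assumes "\<epsilon> \<in> {1, -1}" and "0 \<le> f" and "f \<le> pi"
  shows "finsleroid_K g (l1 g \<epsilon> f) (l2 g \<epsilon> f) = 1"
proof -
  have "finsleroid_K g (l1 g \<epsilon> f) (l2 g \<epsilon> f)
      = exp (fG g / 2 * (f - pi / 2)) * exp (fG g * (pi / 2 - f) / 2)"
    using curve_ne_origin[OF assms]
    by (simp add: finsleroid_K_def fB_curve[OF assms] fJ_def fPhi_curve[OF assms])
  also have "\<dots> = 1"
    by (simp add: field_simps flip: exp_add)
  finally show ?thesis .
qed

lemma curve_wronskian:
  "l2 g \<epsilon> f * deriv (l1 g \<epsilon>) f - l1 g \<epsilon> f * deriv (l2 g \<epsilon>) f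
    = \<epsilon> / fh g * (exp (fG g / 2 * (f - pi / 2)))\<^sup>2"
proof -
  define G e c s where "G = fG g" and "e = exp (G / 2 * (f - pi / 2))"
    and "c = cos f" and "s = sin f"
  have "(l1 g \<epsilon> has_real_derivative \<epsilon> / fh g * (c + G / 2 * s) * e) (at f)"
    unfolding l1_def[abs_def] G_def e_def c_def s_def using fh_pos
    by (auto intro!: derivative_eq_intros simp: field_simps)
  then have d1: "deriv (l1 g \<epsilon>) f = \<epsilon> / fh g * (c + G / 2 * s) * e"
    by (rule DERIV_imp_deriv)
  have "(l2 g \<epsilon> has_real_derivative - (1 + G\<^sup>2 / 4) * s * e) (at f)"
    unfolding l2_def[abs_def] G_def e_def s_def
    by (auto intro!: derivative_eq_intros simp: field_simps power2_eq_square)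
  then have d2: "deriv (l2 g \<epsilon>) f = - (1 + G\<^sup>2 / 4) * s * e"
    by (rule DERIV_imp_deriv)
  have l1: "l1 g \<epsilon> f = \<epsilon> / fh g * s * e" and l2: "l2 g \<epsilon> f = (c - G / 2 * s) * e"
    by (simp_all add: l1_def l2_def G_def e_def c_def s_def)
  have "l2 g \<epsilon> f * deriv (l1 g \<epsilon>) f - l1 g \<epsilon> f * deriv (l2 g \<epsilon>) f
      = \<epsilon> / fh g * e\<^sup>2 * (c\<^sup>2 + s\<^sup>2)"
    unfolding d1 d2 l1 l2 using fh_pos by (simp add: field_simps power2_eq_square)
  also have "c\<^sup>2 + s\<^sup>2 = 1"
    by (simp add: c_def s_def)
  finally show ?thesis
    by (simp add: e_def G_def)
qed

end

theorem theorem1p1: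
  fixes g \<epsilon> f :: real
  assumes "-2 < g" and "g < 2"
    and "\<epsilon> \<in> {1, -1}"
    and "0 \<le> f" and "f \<le> pi"
  shows "finsleroid_K g (l1 g \<epsilon> f) (l2 g \<epsilon> f) = 1
    \<and> sqrt (finsler_det g (l1 g \<epsilon> f) (l2 g \<epsilon> f))
        * \<bar>l2 g \<epsilon> f * deriv (l1 g \<epsilon>) f - l1 g \<epsilon> f * deriv (l2 g \<epsilon>) f\<bar>
      = 1 / fh g"
proof -
  note g = assms(1,2) and curve = assms(3-5)
  let ?u = "l1 g \<epsilon> f" and ?y = "l2 g \<epsilon> f"
  have "(fJ g ?u ?y)\<^sup>2 = exp (fG g * (pi / 2 - f))"
    by (simp add: fJ_squared fPhi_curve[OF g curve])
  then have "finsler_det g ?u ?y = (exp (fG g * (pi / 2 - f)))\<^sup>2"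
    using finsler_det_eq[OF g curve_ne_origin[OF g curve]]
    by (metis power_mult numeral_Bit0_eq_double)
  then have "sqrt (finsler_det g ?u ?y) * \<bar>?y * deriv (l1 g \<epsilon>) f - ?u * deriv (l2 g \<epsilon>) f\<bar>
      = exp (fG g * (pi / 2 - f)) * (\<bar>\<epsilon>\<bar> / fh g * (exp (fG g / 2 * (f - pi / 2)))\<^sup>2)"
    using fh_pos[OF g] by (simp add: curve_wronskian[OF g] abs_mult)
  also have "\<dots> = 1 / fh g"
    using assms(3) by (auto simp: power2_eq_square field_simps simp flip: exp_add)
  finally show ?thesis
    using finsleroid_K_curve[OF g curve] by simp
qed

end
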